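(* Let $F$ be the field of fractions of $R$, let $t_1,t_2$ be independent indeterminates, and work in $\mathrm{BB}_2\otimes_R F(t_1,t_2)$. Put $R_1(t)=-\delta t(t+q\lambda^{-1})+(t-1)(t+q\lambda^{-1})X_1+\delta t(t-1)e_1$ and $K(t)=\bigl(t^2q_1(1-t^2)^{-1}+Y\bigr)f_1(t)$, where $f_1$ is an arbitrary function with values in $F(t_1,t_2)$. Then the reflection equation $R_1(t_1/t_2)K(t_1)R_1(t_1t_2)K(t_2)=K(t_2)R_1(t_1t_2)K(t_1)R_1(t_1/t_2)$ holds.
   Context: $R$ is an integral domain with units $q,\lambda,x,q_0$ and elements $A,q_1$; $\delta=q-q^{-1}$; standing assumptions $x\delta=\delta-\lambda+\lambda^{-1}$, $q_0=q^{-1}$, $A(1-q_0\lambda)=q_1x$. $\mathrm{BB}_2$ is the unital $R$-algebra generated by invertible $Y,X_1$ and $e_1$ with relations $X_1e_1=e_1X_1=\lambda e_1$, $e_1^2=xe_1$, $X_1^{-1}=X_1-\delta+\delta e_1$, $X_1^2=1+\delta X_1-\delta\lambda e_1$, $X_1YX_1Y=YX_1YX_1$, $Y^2=q_1Y+q_0$, $YX_1Ye_1=e_1$, $e_1Ye_1=Ae_1$; it is assumed that $e_1\ne0$ with $re_1=0\Rightarrow r=0$ for $r\in R$, and $e_1,Ye_1$ linearly independent. *)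

theory Defs
  imports "HOL-Computational_Algebra.Polynomial"
begin

text \<open>A bivariate polynomial is represented as an element of R[X][Y]; inner variable gets t1,
  outer variable gets t2.\<close>
definition alg_indep2 :: "('r::comm_ring_1 \<Rightarrow> 'k::field) \<Rightarrow> 'k \<Rightarrow> 'k \<Rightarrow> bool" where
  "alg_indep2 \<iota> t1 t2 \<longleftrightarrow>
     (\<forall>p :: 'r poly poly. p \<noteq> 0 \<longrightarrow>
        poly (map_poly (\<lambda>c. poly (map_poly \<iota> c) t1) p) t2 \<noteq> 0)"

definition Rmat :: "('k::field \<Rightarrow> 'a::ring_1) \<Rightarrow> 'k \<Rightarrow> 'k \<Rightarrow> 'k \<Rightarrow> 'a \<Rightarrow> 'a \<Rightarrow> 'k \<Rightarrow> 'a" where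
  "Rmat \<phi> d q lam X1 e1 t =
     \<phi> (- d * t * (t + q * inverse lam)) + \<phi> ((t - 1) * (t + q * inverse lam)) * X1
     + \<phi> (d * t * (t - 1)) * e1"

definition Kmat :: "('k::field \<Rightarrow> 'a::ring_1) \<Rightarrow> 'k \<Rightarrow> 'a \<Rightarrow> ('k \<Rightarrow> 'k) \<Rightarrow> 'k \<Rightarrow> 'a" where
  "Kmat \<phi> q1 Y f1 t = (\<phi> (t^2 * q1 * inverse (1 - t^2)) + Y) * \<phi> (f1 t)"

end

theory Submission
  imports Defs
begin

(* BB_2 is spanned by the twelve words 1, X, Y, XY, YX, XYX, YXY, XYXY, e, Ye, eY, YeY
   (X = X_1): left multiplication by X, Y and e maps their span to itself, using besides the
   defining relations only eYXY = e, XYe = q Ye - q q1 e and eYX = q eY - q q1 e, which follow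
   from the four-braid relation, the quadratic relation for X and Y^-1 = q (Y - q1).  In these
   coordinates both sides of the reflection equation, applied to 1, become explicit vectors, and
   the equation reduces to twelve polynomial identities once x and A are eliminated through
   \<delta> x = \<delta> - \<lambda> + \<lambda>^-1 and \<delta> \<lambda> A = q1 (1 + q \<lambda>); the latter comes from expanding e Y X^2 in two
   ways.  If \<delta> = 0, then X^2 = 1, R(t) is a scalar multiple of X, and the equation reduces to
   the four-braid relation. *)

lemma additive_map:
  fixes f :: "'a::group_add \<Rightarrow> 'b::group_add"
  assumes "\<And>a b. f (a + b) = f a + f b"
  shows "f 0 = 0" "f (- a) = - f a" "f (a - b) = f a - f b"
proof -
  have "f 0 + f 0 = f 0 + 0"
    using assms[of 0 0] by simp
  then show zero: "f 0 = 0"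
    by (rule add_left_imp_eq)
  have "f a + f (- a) = 0" for a
    using assms[of a "- a"] zero by simp
  then show uminus: "f (- a) = - f a" for a
    by (metis minus_unique)
  show "f (a - b) = f a - f b"
    using assms[of a "- b"] uminus[of b] by simp
qed

lemma alg_indep2_transcendental:
  assumes indep: "alg_indep2 \<iota> t1 t2" and iota_zero: "\<iota> 0 = 0" and "p \<noteq> 0"
  shows "poly (map_poly \<iota> p) t1 \<noteq> 0" "poly (map_poly \<iota> p) t2 \<noteq> 0"
proof -
  let ?F = "\<lambda>c. poly (map_poly \<iota> c) t1"
  have F_zero: "?F 0 = 0" by simp
  have indep': "P \<noteq> 0 \<Longrightarrow> poly (map_poly ?F P) t2 \<noteq> 0" for P
    using indep unfolding alg_indep2_def by blast
  show "poly (map_poly \<iota> p) t1 \<noteq> 0"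
    using indep'[of "[:p:]"] \<open>p \<noteq> 0\<close> by (simp add: map_poly_pCons[of ?F, OF F_zero])
  have "map_poly (\<lambda>c. [:c:]) p \<noteq> 0"
    using \<open>p \<noteq> 0\<close> by (simp add: map_poly_eq_0_iff)
  then show "poly (map_poly \<iota> p) t2 \<noteq> 0"
    using indep'[of "map_poly (\<lambda>c. [:c:]) p"]
    by (simp add: map_poly_map_poly[of ?F, OF F_zero] o_def map_poly_pCons iota_zero)
qed

lemma alg_indep2_denominators_nonzero:
  assumes indep: "alg_indep2 \<iota> t1 t2"
    and iota_add: "\<And>a b. \<iota> (a + b) = \<iota> a + \<iota> b" and iota_one: "\<iota> 1 = 1"
  shows "t2 \<noteq> 0" "1 - t1^2 \<noteq> 0" "1 - t2^2 \<noteq> 0"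
proof -
  note iota_zero = additive_map(1)[OF iota_add]
  have "\<iota> (- 1) = - 1"
    using additive_map(2)[OF iota_add] iota_one by metis
  then have "poly (map_poly \<iota> [:0, 1:]) t2 = t2" "poly (map_poly \<iota> [:1, 0, -1:]) t = 1 - t^2" for t
    by (simp_all add: map_poly_pCons iota_zero iota_one power2_eq_square)
  then show "t2 \<noteq> 0" "1 - t1^2 \<noteq> 0" "1 - t2^2 \<noteq> 0"
    using alg_indep2_transcendental[OF indep iota_zero] by (metis pCons_eq_0_iff one_neq_zero)+
qed

locale central_scalars =
  fixes \<phi> :: "'k::field \<Rightarrow> 'a::ring_1"
  assumes phi_add: "\<phi> (a + b) = \<phi> a + \<phi> b"
    and phi_mult: "\<phi> (a * b) = \<phi> a * \<phi> b"
    and phi_one: "\<phi> 1 = 1"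
    and phi_central: "\<phi> a * z = z * \<phi> a"
begin

lemmas phi_zero [simp] = additive_map(1)[OF phi_add]
  and phi_uminus = additive_map(2)[OF phi_add]
  and phi_diff = additive_map(3)[OF phi_add]

lemma mult_phi_left: "z * (\<phi> a * w) = \<phi> a * (z * w)"
  by (metis mult.assoc phi_central)

lemma phi_mult_phi: "\<phi> a * (\<phi> b * w) = \<phi> (a * b) * w"
  by (simp add: phi_mult mult.assoc)

lemma phi_scaled_mult: "\<phi> a * u * (\<phi> b * w) = \<phi> (a * b) * (u * w)"
  by (simp only: mult.assoc mult_phi_left[of u] phi_mult_phi)

lemma phi_mult_cancel:
  assumes "a \<noteq> 0" and "\<phi> a * u = \<phi> a * w"
  shows "u = w"
proof -
  have "\<phi> (inverse a) * (\<phi> a * u) = \<phi> (inverse a) * (\<phi> a * w)"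
    using assms(2) by simp
  then show ?thesis
    using assms(1) by (simp add: phi_mult_phi phi_one)
qed

lemma involution_braid_commute:
  assumes X_X: "X * X = 1" and braid: "X * Y * X * Y = Y * X * Y * X"
  shows "X * (\<phi> a + Y) * X * (\<phi> b + Y) = (\<phi> b + Y) * X * (\<phi> a + Y) * X"
proof -
  have X_X_z: "X * (X * z) = z" for z
    using X_X by (simp flip: mult.assoc)
  note normalize = ring_distribs mult.assoc X_X X_X_z mult_phi_left[of X] mult_phi_left[of Y]
    phi_central[of _ X, symmetric] phi_central[of _ Y, symmetric] phi_mult_phi phi_mult[symmetric]
  have "X * (\<phi> a + Y) * X * (\<phi> b + Y)
      = \<phi> (a * b) + \<phi> a * Y + \<phi> b * (X * (Y * X)) + X * (Y * (X * Y))"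
    by (simp add: normalize)
  moreover have "(\<phi> b + Y) * X * (\<phi> a + Y) * X
      = \<phi> (a * b) + \<phi> a * Y + \<phi> b * (X * (Y * X)) + Y * (X * (Y * X))"
    by (simp add: normalize mult.commute add_ac)
  ultimately show ?thesis
    using braid by (simp add: mult.assoc)
qed

lemma reflection_equation_delta_zero:
  assumes "X * X = 1" and "X * Y * X * Y = Y * X * Y * X"
  shows "Rmat \<phi> 0 q lam X e a * Kmat \<phi> q1 Y f b * Rmat \<phi> 0 q lam X e c * Kmat \<phi> q1 Y f d
       = Kmat \<phi> q1 Y f d * Rmat \<phi> 0 q lam X e c * Kmat \<phi> q1 Y f b * Rmat \<phi> 0 q lam X e a"
proof -
  have R: "Rmat \<phi> 0 q lam X e t = \<phi> ((t - 1) * (t + q * inverse lam)) * X" for t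
    by (simp add: Rmat_def)
  have K: "Kmat \<phi> q1 Y f t = \<phi> (f t) * (\<phi> (t^2 * q1 * inverse (1 - t^2)) + Y)" for t
    unfolding Kmat_def by (rule phi_central[symmetric])
  show ?thesis
    unfolding R K phi_scaled_mult using involution_braid_commute[OF assms] by (simp add: ac_simps)
qed

end

record 'k bb2_coords =
  c1 :: 'k  cX :: 'k  cY :: 'k  cXY :: 'k  cYX :: 'k  cXYX :: 'k  cYXY :: 'k  cXYXY :: 'k
  ce :: 'k  cYe :: 'k  ceY :: 'k  cYeY :: 'k

definition coords_add :: "'k::field bb2_coords \<Rightarrow> 'k bb2_coords \<Rightarrow> 'k bb2_coords" where
  "coords_add u v = \<lparr>c1 = c1 u + c1 v, cX = cX u + cX v, cY = cY u + cY v, cXY = cXY u + cXY v,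
     cYX = cYX u + cYX v, cXYX = cXYX u + cXYX v, cYXY = cYXY u + cYXY v, cXYXY = cXYXY u + cXYXY v,
     ce = ce u + ce v, cYe = cYe u + cYe v, ceY = ceY u + ceY v, cYeY = cYeY u + cYeY v\<rparr>"

definition coords_scale :: "'k::field \<Rightarrow> 'k bb2_coords \<Rightarrow> 'k bb2_coords" where
  "coords_scale a v = \<lparr>c1 = a * c1 v, cX = a * cX v, cY = a * cY v, cXY = a * cXY v,
     cYX = a * cYX v, cXYX = a * cXYX v, cYXY = a * cYXY v, cXYXY = a * cXYXY v,
     ce = a * ce v, cYe = a * cYe v, ceY = a * ceY v, cYeY = a * cYeY v\<rparr>"

definition coords_one :: "'k::field bb2_coords" where
  "coords_one = \<lparr>c1 = 1, cX = 0, cY = 0, cXY = 0, cYX = 0, cXYX = 0, cYXY = 0, cXYXY = 0,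
     ce = 0, cYe = 0, ceY = 0, cYeY = 0\<rparr>"

locale bb2_algebra = central_scalars \<phi> for \<phi> :: "'k::field \<Rightarrow> 'a::ring_1" +
  fixes X Y e :: 'a and \<delta> q q0 q1 lam x A :: 'k
  assumes delta_def: "\<delta> = q - q0" and q0_q: "q0 * q = 1"
    and delta_nz: "\<delta> \<noteq> 0" and lam_nz: "lam \<noteq> 0"
    and X_e: "X * e = \<phi> lam * e" and e_X: "e * X = \<phi> lam * e"
    and e_e: "e * e = \<phi> x * e"
    and X_X: "X * X = 1 + \<phi> \<delta> * X - \<phi> (\<delta> * lam) * e"
    and braid: "X * Y * X * Y = Y * X * Y * X"
    and Y_Y: "Y * Y = \<phi> q1 * Y + \<phi> q0"
    and Y_X_Y_e: "Y * X * Y * e = e"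
    and e_Y_e: "e * Y * e = \<phi> A * e"
begin

lemmas generators_phi_commute =
  mult_phi_left[of X] mult_phi_left[of Y] mult_phi_left[of e]
  phi_central[of _ X, symmetric] phi_central[of _ Y, symmetric] phi_central[of _ e, symmetric]

lemma Y_inverse: "\<phi> q * (Y - \<phi> q1) * Y = 1" "Y * (\<phi> q * (Y - \<phi> q1)) = 1"
proof -
  have "(Y - \<phi> q1) * Y = \<phi> q0" "Y * (Y - \<phi> q1) = \<phi> q0"
    using Y_Y phi_central[of q1 Y] by (simp_all add: algebra_simps)
  then show "\<phi> q * (Y - \<phi> q1) * Y = 1" "Y * (\<phi> q * (Y - \<phi> q1)) = 1"
    using q0_q by (simp_all add: mult.assoc mult_phi_left phi_mult[symmetric] phi_one mult.commute)
qed

lemma X_Y_e: "X * Y * e = \<phi> q * (Y * e) - \<phi> (q * q1) * e"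
proof -
  have "X * Y * e = \<phi> q * (Y - \<phi> q1) * (Y * X * Y * e)"
    using Y_inverse(1) by (metis mult.assoc mult_1_left)
  then show ?thesis
    by (simp add: Y_X_Y_e[unfolded mult.assoc] algebra_simps phi_mult)
qed

lemma e_Y_X_Y: "e * Y * X * Y = e"
proof -
  have "Y * X * Y * (X * X) = Y * X * Y + \<phi> \<delta> * (X * Y * X * Y) - \<phi> (\<delta> * lam) * e"
    unfolding X_X using Y_X_Y_e braid by (simp add: algebra_simps mult_phi_left)
  moreover have "Y * X * Y * (X * X) = (X * X) * Y * X * Y"
    using braid by (metis mult.assoc)
  moreover have "(X * X) * Y * X * Y
      = Y * X * Y + \<phi> \<delta> * (X * Y * X * Y) - \<phi> (\<delta> * lam) * (e * Y * X * Y)"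
    unfolding X_X by (simp add: algebra_simps)
  ultimately have "\<phi> (\<delta> * lam) * (e * Y * X * Y) = \<phi> (\<delta> * lam) * e"
    by simp
  then show ?thesis
    by (rule phi_mult_cancel[rotated]) (simp add: delta_nz lam_nz)
qed

lemma e_Y_X: "e * Y * X = \<phi> q * (e * Y) - \<phi> (q * q1) * e"
proof -
  have "e * Y * X = e * Y * X * Y * (\<phi> q * (Y - \<phi> q1))"
    using Y_inverse(2) by (metis mult.assoc mult_1_right)
  also have "\<dots> = e * (\<phi> q * (Y - \<phi> q1))"
    by (simp only: e_Y_X_Y)
  finally show ?thesis
    by (simp add: algebra_simps generators_phi_commute phi_mult_phi)
qed

lemma word_rewrites:
  shows "X * (X * z) = z + \<phi> \<delta> * (X * z) - \<phi> (\<delta> * lam) * (e * z)"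
    and "X * (e * z) = \<phi> lam * (e * z)"
    and "e * (X * z) = \<phi> lam * (e * z)"
    and "e * (e * z) = \<phi> x * (e * z)"
    and "Y * (Y * z) = \<phi> q1 * (Y * z) + \<phi> q0 * z"
    and "Y * (X * (Y * (X * z))) = X * (Y * (X * (Y * z)))"
    and "Y * (X * (Y * (e * z))) = e * z"
    and "e * (Y * (e * z)) = \<phi> A * (e * z)"
    and "X * (Y * (e * z)) = \<phi> q * (Y * (e * z)) - \<phi> (q * q1) * (e * z)"
    and "e * (Y * (X * z)) = \<phi> q * (e * (Y * z)) - \<phi> (q * q1) * (e * z)"
    and "e * (Y * (X * (Y * z))) = e * z"
proof -
  have mult_right: "u = v \<Longrightarrow> u * z = v * z" for u v
    by simp
  show "X * (X * z) = z + \<phi> \<delta> * (X * z) - \<phi> (\<delta> * lam) * (e * z)"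
    using mult_right[OF X_X] by (simp add: ring_distribs mult.assoc)
  show "X * (e * z) = \<phi> lam * (e * z)"
    using mult_right[OF X_e] by (simp add: mult.assoc)
  show "e * (X * z) = \<phi> lam * (e * z)"
    using mult_right[OF e_X] by (simp add: mult.assoc)
  show "e * (e * z) = \<phi> x * (e * z)"
    using mult_right[OF e_e] by (simp add: mult.assoc)
  show "Y * (Y * z) = \<phi> q1 * (Y * z) + \<phi> q0 * z"
    using mult_right[OF Y_Y] by (simp add: ring_distribs mult.assoc)
  show "Y * (X * (Y * (X * z))) = X * (Y * (X * (Y * z)))"
    using mult_right[OF braid] by (simp add: mult.assoc)
  show "Y * (X * (Y * (e * z))) = e * z"
    using mult_right[OF Y_X_Y_e] by (simp add: mult.assoc)
  show "e * (Y * (e * z)) = \<phi> A * (e * z)"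
    using mult_right[OF e_Y_e] by (simp add: mult.assoc)
  show "X * (Y * (e * z)) = \<phi> q * (Y * (e * z)) - \<phi> (q * q1) * (e * z)"
    using mult_right[OF X_Y_e] by (simp add: ring_distribs mult.assoc)
  show "e * (Y * (X * z)) = \<phi> q * (e * (Y * z)) - \<phi> (q * q1) * (e * z)"
    using mult_right[OF e_Y_X] by (simp add: ring_distribs mult.assoc)
  show "e * (Y * (X * (Y * z))) = e * z"
    using mult_right[OF e_Y_X_Y] by (simp add: mult.assoc)
qed

lemmas word_rewrites_1 = word_rewrites[where z = 1, unfolded mult_1_right]

lemma A_relation: "\<phi> (q1 + q * q1 * lam - \<delta> * lam * A) * e = 0"
proof -
  have expand_XX: "e * Y * (X * X)
      = e * Y + \<phi> \<delta> * (\<phi> q * (e * Y) - \<phi> (q * q1) * e) - \<phi> (\<delta> * lam) * (\<phi> A * e)"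
    unfolding X_X by (simp add: ring_distribs mult.assoc word_rewrites_1 generators_phi_commute)
  have expand_eYX: "e * Y * X * X
      = \<phi> q * (\<phi> q * (e * Y) - \<phi> (q * q1) * e) - \<phi> (q * q1) * (\<phi> lam * e)"
    unfolding e_Y_X by (simp add: ring_distribs mult.assoc word_rewrites_1 generators_phi_commute)
  have "\<phi> (q1 + q * q1 * lam - \<delta> * lam * A) * e
      = \<phi> (1 + \<delta> * q - q * q) * (e * Y)
        + \<phi> (q * q * q1 - \<delta> * q * q1 - \<delta> * lam * A + q * q1 * lam) * e"
    using q0_q by (simp add: delta_def algebra_simps)
  also have "\<dots> = e * Y * (X * X) - e * Y * X * X"
    unfolding expand_XX expand_eYX
    by (simp add: algebra_simps phi_add phi_diff phi_one phi_mult_phi)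
  finally show ?thesis
    by (simp add: mult.assoc)
qed

text \<open>The words containing e carry an extra factor \<open>\<delta>\<close>: then the coordinates of R are
  polynomial in the parameters, and x and A only enter through \<open>\<delta> x\<close> and \<open>\<delta> A\<close>.\<close>

definition coords_eval :: "'k bb2_coords \<Rightarrow> 'a" where
  "coords_eval v = \<phi> (c1 v) + \<phi> (cX v) * X + \<phi> (cY v) * Y + \<phi> (cXY v) * (X * Y)
     + \<phi> (cYX v) * (Y * X) + \<phi> (cXYX v) * (X * (Y * X)) + \<phi> (cYXY v) * (Y * (X * Y))
     + \<phi> (cXYXY v) * (X * (Y * (X * Y))) + \<phi> (\<delta> * ce v) * e + \<phi> (\<delta> * cYe v) * (Y * e)
     + \<phi> (\<delta> * ceY v) * (e * Y) + \<phi> (\<delta> * cYeY v) * (Y * (e * Y))"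

definition X_mult :: "'k bb2_coords \<Rightarrow> 'k bb2_coords" where
  "X_mult v = \<lparr>c1 = cX v, cX = c1 v + \<delta> * cX v, cY = cXY v, cXY = cY v + \<delta> * cXY v,
     cYX = cXYX v, cXYX = cYX v + \<delta> * cXYX v, cYXY = cXYXY v, cXYXY = cYXY v + \<delta> * cXYXY v,
     ce = lam * ce v - q * q1 * cYe v - lam * (cX v + cXYXY v) + lam * q * q1 * cXYX v,
     cYe = q * cYe v,
     ceY = lam * ceY v - q * q1 * cYeY v - lam * cXY v - lam * q * cXYX v,
     cYeY = q * cYeY v\<rparr>"

definition Y_mult :: "'k bb2_coords \<Rightarrow> 'k bb2_coords" where
  "Y_mult v = \<lparr>c1 = q0 * cY v, cX = q0 * cYX v, cY = c1 v + q1 * cY v, cXY = q0 * cYXY v,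
     cYX = cX v + q1 * cYX v, cXYX = q0 * cXYXY v, cYXY = cXY v + q1 * cYXY v,
     cXYXY = cXYX v + q1 * cXYXY v, ce = q0 * cYe v, cYe = ce v + q1 * cYe v,
     ceY = q0 * cYeY v, cYeY = ceY v + q1 * cYeY v\<rparr>"

definition delta_e_mult :: "'k bb2_coords \<Rightarrow> 'k bb2_coords" where
  "delta_e_mult v = \<lparr>c1 = 0, cX = 0, cY = 0, cXY = 0, cYX = 0, cXYX = 0, cYXY = 0, cXYXY = 0,
     ce = c1 v + lam * cX v - q * q1 * cYX v - lam * q * q1 * cXYX v + cYXY v + lam * cXYXY v
       + \<delta> * x * ce v + \<delta> * A * cYe v,
     cYe = 0,
     ceY = cY v + lam * cXY v + q * cYX v + lam * q * cXYX v + \<delta> * x * ceY v + \<delta> * A * cYeY v,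
     cYeY = 0\<rparr>"

lemma q_q0: "q * q0 = 1" "q * (q0 * c) = c"
  using q0_q by (simp_all add: mult.commute)

lemmas normalize_words =
  mult.assoc ring_distribs word_rewrites word_rewrites_1 generators_phi_commute phi_mult_phi
  phi_add phi_diff phi_uminus phi_one phi_mult[symmetric] q_q0

lemma X_mult_eval: "X * coords_eval v = coords_eval (X_mult v)"
  by (simp add: coords_eval_def X_mult_def normalize_words algebra_simps)

lemma Y_mult_eval: "Y * coords_eval v = coords_eval (Y_mult v)"
  by (simp add: coords_eval_def Y_mult_def normalize_words algebra_simps)

lemma delta_e_mult_eval: "\<phi> \<delta> * (e * coords_eval v) = coords_eval (delta_e_mult v)"
  by (simp add: coords_eval_def delta_e_mult_def normalize_words algebra_simps)

lemma coords_eval_add: "coords_eval (coords_add u v) = coords_eval u + coords_eval v"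
  by (simp add: coords_eval_def coords_add_def phi_add algebra_simps)

lemma coords_eval_scale: "coords_eval (coords_scale a v) = \<phi> a * coords_eval v"
  by (simp add: coords_eval_def coords_scale_def distrib_left mult.assoc phi_mult_phi phi_mult[symmetric]
      mult.commute mult.left_commute)

lemma coords_eval_one: "coords_eval coords_one = 1"
  by (simp add: coords_eval_def coords_one_def phi_one)

text \<open>Coordinates of \<open>b\<^sup>2 R(a / b)\<close> and \<open>(1 - t\<^sup>2) K(t) / f(t)\<close>: the scalar factors commute,
  so only these polynomial versions of the reflection equation need to be checked.\<close>

definition R_homog_mult :: "'k \<Rightarrow> 'k \<Rightarrow> 'k bb2_coords \<Rightarrow> 'k bb2_coords" where
  "R_homog_mult a b v = coords_add (coords_scale (- \<delta> * a * (a + q * inverse lam * b)) v)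
     (coords_add (coords_scale ((a - b) * (a + q * inverse lam * b)) (X_mult v))
       (coords_scale (a * (a - b)) (delta_e_mult v)))"

definition K_numer_mult :: "'k \<Rightarrow> 'k bb2_coords \<Rightarrow> 'k bb2_coords" where
  "K_numer_mult t v = coords_add (coords_scale (t^2 * q1) v) (coords_scale (1 - t^2) (Y_mult v))"

lemma Rmat_mult_eval:
  assumes "b \<noteq> 0"
  shows "Rmat \<phi> \<delta> q lam X e (a / b) * coords_eval v
       = \<phi> (inverse (b^2)) * coords_eval (R_homog_mult a b v)"
proof -
  have scalars:
    "- \<delta> * (a / b) * (a / b + q * inverse lam) = inverse (b^2) * (- \<delta> * a * (a + q * inverse lam * b))"
    "(a / b - 1) * (a / b + q * inverse lam) = inverse (b^2) * ((a - b) * (a + q * inverse lam * b))"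
    "\<delta> * (a / b) * (a / b - 1) = inverse (b^2) * (a * (a - b) * \<delta>)"
    using assms by (simp_all add: field_simps power2_eq_square)
  have "Rmat \<phi> \<delta> q lam X e (a / b) = \<phi> (inverse (b^2)) * (\<phi> (- \<delta> * a * (a + q * inverse lam * b))
      + \<phi> ((a - b) * (a + q * inverse lam * b)) * X + \<phi> (a * (a - b)) * (\<phi> \<delta> * e))"
    unfolding Rmat_def scalars phi_mult[of "inverse (b^2)"]
    by (simp only: distrib_left mult.assoc phi_mult_phi)
  then show ?thesis
    by (simp add: R_homog_mult_def coords_eval_add coords_eval_scale X_mult_eval delta_e_mult_eval
        distrib_left distrib_right mult.assoc)
qed

lemma Kmat_mult_eval:
  assumes "1 - t^2 \<noteq> 0"
  shows "Kmat \<phi> q1 Y f t * coords_eval v = \<phi> (f t / (1 - t^2)) * coords_eval (K_numer_mult t v)"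
proof -
  have scalars: "t^2 * q1 * inverse (1 - t^2) * f t = f t / (1 - t^2) * (t^2 * q1)"
    "f t = f t / (1 - t^2) * (1 - t^2)"
    using assms by (simp_all add: field_simps)
  have "Kmat \<phi> q1 Y f t = \<phi> (t^2 * q1 * inverse (1 - t^2) * f t) + \<phi> (f t) * Y"
    by (simp add: Kmat_def distrib_right phi_mult generators_phi_commute)
  also have "\<dots> = \<phi> (f t / (1 - t^2)) * (\<phi> (t^2 * q1) + \<phi> (1 - t^2) * Y)"
    by (subst (1 2) scalars) (simp only: phi_mult[of "f t / (1 - t^2)"] distrib_left mult.assoc)
  finally show ?thesis
    by (simp add: K_numer_mult_def coords_eval_add coords_eval_scale Y_mult_eval
        distrib_left distrib_right mult.assoc)
qed

lemma reflection_equation_coords: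
  assumes x_rel: "\<delta> * x = \<delta> - lam + inverse lam"
    and A_rel: "\<delta> * A = q1 * (1 + q * lam) * inverse lam"
  shows "R_homog_mult t1 t2 (K_numer_mult t1 (R_homog_mult (t1 * t2) 1 (K_numer_mult t2 coords_one)))
       = K_numer_mult t2 (R_homog_mult (t1 * t2) 1 (K_numer_mult t1 (R_homog_mult t1 t2 coords_one)))"
proof -
  obtain li where li: "inverse lam = li" by simp
  have lam_li: "lam * li = 1" using lam_nz li by auto
  show ?thesis
    apply (simp only: R_homog_mult_def K_numer_mult_def coords_add_def coords_scale_def
        X_mult_def Y_mult_def delta_e_mult_def coords_one_def bb2_coords.select_convs
        bb2_coords.ext_inject mult_zero_left mult_zero_right add_0_left add_0_right
        mult_1_left mult_1_right diff_zero diff_0 minus_zero x_rel A_rel)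
    apply (simp only: li delta_def)
    apply (intro conjI)
    apply (use q0_q lam_li in algebra | simp add: algebra_simps)+
    done
qed

theorem reflection_equation:
  assumes "\<delta> * x = \<delta> - lam + inverse lam" and "\<delta> * A = q1 * (1 + q * lam) * inverse lam"
    and "t2 \<noteq> 0" and "1 - t1^2 \<noteq> 0" and "1 - t2^2 \<noteq> 0"
  shows "Rmat \<phi> \<delta> q lam X e (t1 / t2) * Kmat \<phi> q1 Y f t1 * Rmat \<phi> \<delta> q lam X e (t1 * t2)
           * Kmat \<phi> q1 Y f t2
       = Kmat \<phi> q1 Y f t2 * Rmat \<phi> \<delta> q lam X e (t1 * t2) * Kmat \<phi> q1 Y f t1
           * Rmat \<phi> \<delta> q lam X e (t1 / t2)"
proof -
  let ?R = "Rmat \<phi> \<delta> q lam X e" and ?K = "Kmat \<phi> q1 Y f"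
  let ?c = "inverse (t2^2) * (f t1 / (1 - t1^2) * (f t2 / (1 - t2^2)))"
  note mult_eval = Rmat_mult_eval[OF \<open>t2 \<noteq> 0\<close>] Rmat_mult_eval[where b = 1 and a = "t1 * t2", simplified]
    Kmat_mult_eval[OF \<open>1 - t1^2 \<noteq> 0\<close>] Kmat_mult_eval[OF \<open>1 - t2^2 \<noteq> 0\<close>]
    mult_phi_left[where z = "?R t" for t] mult_phi_left[where z = "?K t" for t] phi_mult_phi
  have "?R (t1 / t2) * ?K t1 * ?R (t1 * t2) * ?K t2 * coords_eval coords_one
      = \<phi> ?c * coords_eval (R_homog_mult t1 t2 (K_numer_mult t1
          (R_homog_mult (t1 * t2) 1 (K_numer_mult t2 coords_one))))"
    by (simp add: mult.assoc mult_eval mult.commute mult.left_commute)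
  also have "\<dots> = \<phi> ?c * coords_eval (K_numer_mult t2 (R_homog_mult (t1 * t2) 1
          (K_numer_mult t1 (R_homog_mult t1 t2 coords_one))))"
    by (simp only: reflection_equation_coords[OF assms(1,2)])
  also have "\<dots> = ?K t2 * ?R (t1 * t2) * ?K t1 * ?R (t1 / t2) * coords_eval coords_one"
    by (simp add: mult.assoc mult_eval mult.commute mult.left_commute)
  finally show ?thesis
    by (simp add: coords_eval_one)
qed

end

theorem proposition20:
  fixes \<iota> :: "'r::idom \<Rightarrow> 'k::field"
    and \<phi> :: "'k \<Rightarrow> 'a::ring_1"
    and q lam x q0 A q1 :: 'r
    and Y X1 e1 :: 'a
    and t1 t2 :: 'k
    and f1 :: "'k \<Rightarrow> 'k"
  defines "\<delta> \<equiv> q - q0"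
  (* R embeds into the field k (which contains F(t1,t2)) *)
  assumes iota_add: "\<And>a b. \<iota> (a + b) = \<iota> a + \<iota> b"
    and iota_mult: "\<And>a b. \<iota> (a * b) = \<iota> a * \<iota> b"
    and iota_one: "\<iota> 1 = 1"
    and iota_inj: "inj \<iota>"
  (* t1, t2 independent indeterminates over R *)
    and indep: "alg_indep2 \<iota> t1 t2"
  (* 'a is a k-algebra via the central ring homomorphism phi *)
    and phi_add: "\<And>a b. \<phi> (a + b) = \<phi> a + \<phi> b"
    and phi_mult: "\<And>a b. \<phi> (a * b) = \<phi> a * \<phi> b"
    and phi_one: "\<phi> 1 = 1"
    and phi_central: "\<And>a z. \<phi> a * z = z * \<phi> a"
  (* standing assumptions on the parameters of R *)
    and units: "q dvd 1" "lam dvd 1" "x dvd 1" "q0 dvd 1"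
    and q0_def: "q0 * q = 1"
    and x_rel: "\<iota> x * \<iota> \<delta> = \<iota> \<delta> - \<iota> lam + inverse (\<iota> lam)"
    and A_rel: "A * (1 - q0 * lam) = q1 * x"
  (* defining relations of BB_2 *)
    and Y_inv: "\<exists>Yi. Y * Yi = 1 \<and> Yi * Y = 1"
    and X1_inv: "\<exists>Xi. X1 * Xi = 1 \<and> Xi * X1 = 1"
    and r1: "X1 * e1 = \<phi> (\<iota> lam) * e1" "e1 * X1 = \<phi> (\<iota> lam) * e1"
    and r2: "e1 * e1 = \<phi> (\<iota> x) * e1"
    and r3: "X1 * (X1 - \<phi> (\<iota> \<delta>) + \<phi> (\<iota> \<delta>) * e1) = 1"
            "(X1 - \<phi> (\<iota> \<delta>) + \<phi> (\<iota> \<delta>) * e1) * X1 = 1"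
    and r4: "X1 * X1 = 1 + \<phi> (\<iota> \<delta>) * X1 - \<phi> (\<iota> (\<delta> * lam)) * e1"
    and r5: "X1 * Y * X1 * Y = Y * X1 * Y * X1"
    and r6: "Y * Y = \<phi> (\<iota> q1) * Y + \<phi> (\<iota> q0)"
    and r7: "Y * X1 * Y * e1 = e1"
    and r8: "e1 * Y * e1 = \<phi> (\<iota> A) * e1"
  (* nondegeneracy assumptions on BB_2 *)
    and e1_nz: "e1 \<noteq> 0"
    and e1_tf: "\<And>r. \<phi> (\<iota> r) * e1 = 0 \<Longrightarrow> r = 0"
    and e1_Ye1_indep: "\<And>a b. \<phi> (\<iota> a) * e1 + \<phi> (\<iota> b) * (Y * e1) = 0 \<Longrightarrow> a = 0 \<and> b = 0"
  shows "Rmat \<phi> (\<iota> \<delta>) (\<iota> q) (\<iota> lam) X1 e1 (t1 / t2) * Kmat \<phi> (\<iota> q1) Y f1 t1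
           * Rmat \<phi> (\<iota> \<delta>) (\<iota> q) (\<iota> lam) X1 e1 (t1 * t2) * Kmat \<phi> (\<iota> q1) Y f1 t2
       = Kmat \<phi> (\<iota> q1) Y f1 t2 * Rmat \<phi> (\<iota> \<delta>) (\<iota> q) (\<iota> lam) X1 e1 (t1 * t2)
           * Kmat \<phi> (\<iota> q1) Y f1 t1 * Rmat \<phi> (\<iota> \<delta>) (\<iota> q) (\<iota> lam) X1 e1 (t1 / t2)"
proof -
  interpret central_scalars \<phi>
    by unfold_locales (fact phi_add phi_mult phi_one phi_central)+
  note iota_zero = additive_map(1)[OF iota_add] and iota_diff = additive_map(3)[OF iota_add]
  show ?thesis
  proof (cases "\<iota> \<delta> = 0")
    case True
    then have "X1 * X1 = 1"
      using r4 by (simp add: iota_mult)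
    then show ?thesis
      unfolding True using r5 by (rule reflection_equation_delta_zero)
  next
    case False
    obtain u where "lam * u = 1"
      using units(2) by (metis dvdE)
    then have lam_nz: "\<iota> lam \<noteq> 0"
      using iota_mult iota_one by (metis mult_zero_left zero_neq_one)
    have "\<iota> q0 * \<iota> q = 1"
      using q0_def iota_mult iota_one by metis
    interpret bb2_algebra \<phi> X1 Y e1 "\<iota> \<delta>" "\<iota> q" "\<iota> q0" "\<iota> q1" "\<iota> lam" "\<iota> x" "\<iota> A"
      by unfold_locales (use False lam_nz r1 r2 r4 r5 r6 r7 r8 \<open>\<iota> q0 * \<iota> q = 1\<close> in
          \<open>simp_all add: \<delta>_def iota_diff iota_mult\<close>)
    have "\<phi> (\<iota> (q1 + q * q1 * lam - \<delta> * lam * A)) * e1 = 0"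
      using A_relation by (simp add: iota_add iota_mult iota_diff)
    then have "\<iota> (q1 + q * q1 * lam - \<delta> * lam * A) = 0"
      using e1_tf iota_zero by metis
    then have "\<iota> \<delta> * \<iota> A = \<iota> q1 * (1 + \<iota> q * \<iota> lam) * inverse (\<iota> lam)"
      using lam_nz by (simp add: iota_add iota_mult iota_diff field_simps)
    moreover have "\<iota> \<delta> * \<iota> x = \<iota> \<delta> - \<iota> lam + inverse (\<iota> lam)"
      using x_rel by (simp add: mult.commute)
    ultimately show ?thesis
      using alg_indep2_denominators_nonzero[OF indep iota_add iota_one] by (intro reflection_equation)
  qed
qed

end
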